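(* Let $\mathcal C$ be a category with a factorisation system $(\mathcal E,\mathcal M)$ where $\mathcal M$ consists of monomorphisms. Suppose we are given a commuting square $C\to A$, $C\to B$, $a:A\to D$, $b:B\to D$ with $a,b\in\mathcal M$, and suppose that the span $A\leftarrow C\to B$ has a multipushout. Let $P$ be the (unique) instance of this multipushout admitting a morphism $u:P\to D$ of cocones into $A\xrightarrow{a}D\xleftarrow{b}B$, and let $P\to Q\to D$ be the $(\mathcal E,\mathcal M)$-factorisation of $u$. Then $Q\to D$, together with the induced morphisms $A\to P\to Q$ and $B\to P\to Q$ (which lie in $\mathcal M$), is the join $A\vee B$ of the subobjects $a$ and $b$ of $D$ in $\mathcal C_{\mathcal M}$.
   Context: A factorisation system $(\mathcal E,\mathcal M)$ is an orthogonal factorisation system; $\mathcal C_{\mathcal M}$ is the subcategory of $\mathcal C$ with all objects and with morphisms those in $\mathcal M$; subobjects of $D$ in $\mathcal C_{\mathcal M}$ are (isomorphism classes of) morphisms in $\mathcal M$ with codomain $D$, ordered by factorisation through morphisms of $\mathcal M$, and the join is the least upper bound. A multipushout of a span $A\xleftarrow{f}C\xrightarrow{g}B$ is a set $\{A\xrightarrow{h_i}P_i\xleftarrow{k_i}B\}_{i\in I}$ of cocones over the span such that for every cocone $A\xrightarrow{x}D\xleftarrow{y}B$ there are a unique $i\in I$ and a unique $u:P_i\to D$ with $uh_i=x$ and $uk_i=y$; each $P_i$ (with $h_i,k_i$) is an instance of the multipushout. *)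

theory Defs
  imports Main
begin

text \<open>A (small or large) category presented by its objects, arrows, domain, codomain,
  composition (Comp g f = g after f, defined when Cod f = Dom g) and identities.\<close>

record ('o, 'a) cat =
  Obj  :: "'o set"
  Arr  :: "'a set"
  Dom  :: "'a \<Rightarrow> 'o"
  Cod  :: "'a \<Rightarrow> 'o"
  Comp :: "'a \<Rightarrow> 'a \<Rightarrow> 'a"
  Id   :: "'o \<Rightarrow> 'a"

definition hom :: "('o, 'a) cat \<Rightarrow> 'o \<Rightarrow> 'o \<Rightarrow> 'a set" where
  "hom C X Y = {f \<in> Arr C. Dom C f = X \<and> Cod C f = Y}"

definition category :: "('o, 'a) cat \<Rightarrow> bool" where
  "category C \<longleftrightarrow>
     (\<forall>f \<in> Arr C. Dom C f \<in> Obj C \<and> Cod C f \<in> Obj C) \<and>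
     (\<forall>X \<in> Obj C. Id C X \<in> hom C X X) \<and>
     (\<forall>f \<in> Arr C. \<forall>g \<in> Arr C. Cod C f = Dom C g \<longrightarrow> Comp C g f \<in> hom C (Dom C f) (Cod C g)) \<and>
     (\<forall>f \<in> Arr C. Comp C (Id C (Cod C f)) f = f \<and> Comp C f (Id C (Dom C f)) = f) \<and>
     (\<forall>f \<in> Arr C. \<forall>g \<in> Arr C. \<forall>h \<in> Arr C. Cod C f = Dom C g \<longrightarrow> Cod C g = Dom C h \<longrightarrow>
        Comp C h (Comp C g f) = Comp C (Comp C h g) f)"

definition iso :: "('o, 'a) cat \<Rightarrow> 'a \<Rightarrow> bool" where
  "iso C f \<longleftrightarrow> f \<in> Arr C \<and>
     (\<exists>g \<in> hom C (Cod C f) (Dom C f). Comp C g f = Id C (Dom C f) \<and> Comp C f g = Id C (Cod C f))"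

definition mono :: "('o, 'a) cat \<Rightarrow> 'a \<Rightarrow> bool" where
  "mono C m \<longleftrightarrow> m \<in> Arr C \<and>
     (\<forall>f \<in> Arr C. \<forall>g \<in> Arr C. Cod C f = Dom C m \<longrightarrow> Cod C g = Dom C m \<longrightarrow> Dom C f = Dom C g \<longrightarrow>
        Comp C m f = Comp C m g \<longrightarrow> f = g)"

definition factorisation_system :: "('o, 'a) cat \<Rightarrow> 'a set \<Rightarrow> 'a set \<Rightarrow> bool" where
  "factorisation_system C E M \<longleftrightarrow>
     E \<subseteq> Arr C \<and> M \<subseteq> Arr C \<and>
     (\<forall>f. iso C f \<longrightarrow> f \<in> E \<and> f \<in> M) \<and>
     (\<forall>f \<in> E. \<forall>g \<in> E. Cod C f = Dom C g \<longrightarrow> Comp C g f \<in> E) \<and>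
     (\<forall>f \<in> M. \<forall>g \<in> M. Cod C f = Dom C g \<longrightarrow> Comp C g f \<in> M) \<and>
     (\<forall>f \<in> Arr C. \<exists>e \<in> E. \<exists>m \<in> M. Cod C e = Dom C m \<and> Comp C m e = f) \<and>
     (\<forall>e \<in> E. \<forall>m \<in> M. \<forall>u \<in> hom C (Dom C e) (Dom C m). \<forall>v \<in> hom C (Cod C e) (Cod C m).
        Comp C v e = Comp C m u \<longrightarrow>
        (\<exists>!d. d \<in> hom C (Cod C e) (Dom C m) \<and> Comp C d e = u \<and> Comp C m d = v))"

definition cocone :: "('o, 'a) cat \<Rightarrow> 'a \<Rightarrow> 'a \<Rightarrow> 'a \<Rightarrow> 'a \<Rightarrow> bool" where
  "cocone C f g x y \<longleftrightarrow> x \<in> Arr C \<and> y \<in> Arr C \<and>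
     Dom C x = Cod C f \<and> Dom C y = Cod C g \<and> Cod C x = Cod C y \<and> Comp C x f = Comp C y g"

definition multipushout :: "('o, 'a) cat \<Rightarrow> 'a \<Rightarrow> 'a \<Rightarrow> ('a \<times> 'a) set \<Rightarrow> bool" where
  "multipushout C f g S \<longleftrightarrow>
     (\<forall>(h, k) \<in> S. cocone C f g h k) \<and>
     (\<forall>x y. cocone C f g x y \<longrightarrow>
        (\<exists>!(p, u). p \<in> S \<and> u \<in> hom C (Cod C (fst p)) (Cod C x) \<and>
                   Comp C u (fst p) = x \<and> Comp C u (snd p) = y))"

definition sub_le :: "('o, 'a) cat \<Rightarrow> 'a set \<Rightarrow> 'a \<Rightarrow> 'a \<Rightarrow> bool" where
  "sub_le C M m n \<longleftrightarrow> (\<exists>t \<in> M. Cod C t = Dom C n \<and> Dom C t = Dom C m \<and> Comp C n t = m)"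

definition is_subobject :: "('o, 'a) cat \<Rightarrow> 'a set \<Rightarrow> 'o \<Rightarrow> 'a \<Rightarrow> bool" where
  "is_subobject C M D m \<longleftrightarrow> m \<in> M \<and> Cod C m = D"

definition is_join :: "('o, 'a) cat \<Rightarrow> 'a set \<Rightarrow> 'o \<Rightarrow> 'a \<Rightarrow> 'a \<Rightarrow> 'a \<Rightarrow> bool" where
  "is_join C M D a b j \<longleftrightarrow> is_subobject C M D j \<and> sub_le C M a j \<and> sub_le C M b j \<and>
     (\<forall>n. is_subobject C M D n \<longrightarrow> sub_le C M a n \<longrightarrow> sub_le C M b n \<longrightarrow> sub_le C M j n)"

end

theory Submission
  imports Defs
begin

text \<open>Write u = q e. Since \<M> consists of monomorphisms it is left cancellable
  (q x \<in> \<M> and q \<in> \<M> imply x \<in> \<M>), so e h and e k lie in \<M> and q is an upper bound of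
  a and b. If n is another upper bound, via s and t, then (s, t) is a cocone because n is
  mono; it factors through some instance by a map w, and then n w is a map of cocones into
  (a, b). Uniqueness of the instance makes it (h, k) with n w = u, so the square q e = n w
  has a diagonal d with q = n d, and d \<in> \<M> by cancellation.\<close>

lemma hom_arr: "f \<in> hom C X Y \<Longrightarrow> f \<in> Arr C \<and> Dom C f = X \<and> Cod C f = Y"
  unfolding hom_def by blast

lemma arr_in_hom: "f \<in> Arr C \<Longrightarrow> f \<in> hom C (Dom C f) (Cod C f)"
  unfolding hom_def by blast

lemma comp_in_hom:
  assumes "category C" "f \<in> hom C X Y" "g \<in> hom C Y Z"
  shows "Comp C g f \<in> hom C X Z"
proof -
  have "\<forall>f \<in> Arr C. \<forall>g \<in> Arr C. Cod C f = Dom C g \<longrightarrow> Comp C g f \<in> hom C (Dom C f) (Cod C g)"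
    using assms(1) unfolding category_def by (elim conjE)
  from this[rule_format, of f g] show ?thesis using hom_arr[OF assms(2)] hom_arr[OF assms(3)]
    by simp
qed

lemma comp_in_homD:
  assumes "category C" "f \<in> Arr C" "g \<in> Arr C" "Cod C f = Dom C g" "Comp C g f \<in> hom C X Z"
  shows "f \<in> hom C X (Dom C g)" "g \<in> hom C (Dom C g) Z"
proof -
  have "f \<in> hom C (Dom C f) (Dom C g)" "g \<in> hom C (Dom C g) (Cod C g)"
    using assms(2-4) arr_in_hom[of f C] arr_in_hom[of g C] by simp_all
  moreover from comp_in_hom[OF assms(1) this] have "Dom C f = X" "Cod C g = Z"
    using assms(5) unfolding hom_def by auto
  ultimately show "f \<in> hom C X (Dom C g)" "g \<in> hom C (Dom C g) Z" by simp_all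
qed

lemma comp_assoc:
  assumes "category C" "f \<in> hom C W X" "g \<in> hom C X Y" "h \<in> hom C Y Z"
  shows "Comp C h (Comp C g f) = Comp C (Comp C h g) f"
proof -
  have "\<forall>f \<in> Arr C. \<forall>g \<in> Arr C. \<forall>h \<in> Arr C. Cod C f = Dom C g \<longrightarrow> Cod C g = Dom C h \<longrightarrow>
          Comp C h (Comp C g f) = Comp C (Comp C h g) f"
    using assms(1) unfolding category_def by (elim conjE)
  from this[rule_format, of f g h] show ?thesis
    using hom_arr[OF assms(2)] hom_arr[OF assms(3)] hom_arr[OF assms(4)] by simp
qed

lemma category_id:
  assumes "category C" "f \<in> hom C X Y"
  shows "Id C X \<in> hom C X X" "Id C Y \<in> hom C Y Y" "Comp C f (Id C X) = f"
proof -
  have obj: "\<forall>f \<in> Arr C. Dom C f \<in> Obj C \<and> Cod C f \<in> Obj C"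
    using assms(1) unfolding category_def by (elim conjE)
  have id: "\<forall>X \<in> Obj C. Id C X \<in> hom C X X"
    using assms(1) unfolding category_def by (elim conjE)
  have unit: "\<forall>f \<in> Arr C. Comp C f (Id C (Dom C f)) = f"
    using assms(1) unfolding category_def by blast
  have "f \<in> Arr C" "Dom C f = X" "Cod C f = Y" using hom_arr[OF assms(2)] by auto
  with obj[rule_format, of f] id[rule_format, of X] id[rule_format, of Y] unit[rule_format, of f]
  show "Id C X \<in> hom C X X" "Id C Y \<in> hom C Y Y" "Comp C f (Id C X) = f"
    by simp_all
qed

lemma mono_cancel:
  assumes "mono C m" "m \<in> hom C Y Z" "x \<in> hom C X Y" "y \<in> hom C X Y"
    and "Comp C m x = Comp C m y"
  shows "x = y"
proof -
  have "\<forall>f \<in> Arr C. \<forall>g \<in> Arr C. Cod C f = Dom C m \<longrightarrow> Cod C g = Dom C m \<longrightarrow>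
          Dom C f = Dom C g \<longrightarrow> Comp C m f = Comp C m g \<longrightarrow> f = g"
    using assms(1) unfolding mono_def by (elim conjE)
  from this[rule_format, of x y] show ?thesis
    using hom_arr[OF assms(2)] hom_arr[OF assms(3)] hom_arr[OF assms(4)] assms(5) by simp
qed

lemma fs_arr: "factorisation_system C E M \<Longrightarrow> E \<subseteq> Arr C \<and> M \<subseteq> Arr C"
  unfolding factorisation_system_def by (elim conjE) simp

lemma fs_iso_in_M: "factorisation_system C E M \<Longrightarrow> iso C f \<Longrightarrow> f \<in> M"
  unfolding factorisation_system_def by (elim conjE) simp

lemma fs_comp_in_M:
  "factorisation_system C E M \<Longrightarrow> m \<in> M \<Longrightarrow> n \<in> M \<Longrightarrow> Cod C m = Dom C n \<Longrightarrow> Comp C n m \<in> M"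
  unfolding factorisation_system_def by (elim conjE) simp

lemma fs_factor:
  assumes cat: "category C" and fs: "factorisation_system C E M" and f: "f \<in> hom C X Y"
  obtains e m W where "e \<in> E" "m \<in> M" "e \<in> hom C X W" "m \<in> hom C W Y" "Comp C m e = f"
proof -
  have "\<forall>f \<in> Arr C. \<exists>e \<in> E. \<exists>m \<in> M. Cod C e = Dom C m \<and> Comp C m e = f"
    using fs unfolding factorisation_system_def by (elim conjE)
  moreover have "f \<in> Arr C" using hom_arr[OF f] by simp
  ultimately obtain e m where eE: "e \<in> E" and mM: "m \<in> M" and em: "Cod C e = Dom C m"
      and f_eq: "Comp C m e = f"
    by blast
  have "e \<in> Arr C" "m \<in> Arr C" using eE mM fs_arr[OF fs] by auto
  then have e: "e \<in> hom C (Dom C e) (Cod C e)" and m: "m \<in> hom C (Cod C e) (Cod C m)"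
    using arr_in_hom[of e C] arr_in_hom[of m C] em by simp_all
  have "f \<in> hom C (Dom C e) (Cod C m)" using comp_in_hom[OF cat e m] f_eq by simp
  then have "Dom C e = X" "Cod C m = Y" using hom_arr[OF f] unfolding hom_def by auto
  then show ?thesis using that eE mM e m f_eq by simp
qed

lemma fs_lift:
  assumes fs: "factorisation_system C E M" and eE: "e \<in> E" and mM: "m \<in> M"
    and e: "e \<in> hom C X Y" and m: "m \<in> hom C U V"
    and x: "x \<in> hom C X U" and y: "y \<in> hom C Y V" and sq: "Comp C y e = Comp C m x"
  obtains d where "d \<in> hom C Y U" "Comp C d e = x" "Comp C m d = y"
proof -
  have orth: "\<forall>e \<in> E. \<forall>m \<in> M. \<forall>x \<in> hom C (Dom C e) (Dom C m). \<forall>y \<in> hom C (Cod C e) (Cod C m).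
          Comp C y e = Comp C m x \<longrightarrow>
          (\<exists>!d. d \<in> hom C (Cod C e) (Dom C m) \<and> Comp C d e = x \<and> Comp C m d = y)"
    using fs unfolding factorisation_system_def by (elim conjE)
  have "Dom C e = X" "Cod C e = Y" "Dom C m = U" "Cod C m = V"
    using hom_arr[OF e] hom_arr[OF m] by auto
  with x y have "x \<in> hom C (Dom C e) (Dom C m)" "y \<in> hom C (Cod C e) (Cod C m)" by simp_all
  from ex1_implies_ex[OF orth[rule_format, OF eE mM this sq]] that \<open>Cod C e = Y\<close> \<open>Dom C m = U\<close>
  show ?thesis by blast
qed

lemma E_iso_if_mono_comp_in_M:
  assumes cat: "category C" and fs: "factorisation_system C E M"
    and eE: "e \<in> E" and e: "e \<in> hom C X Y" and v: "v \<in> hom C Y Z" and mono: "mono C v"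
    and veM: "Comp C v e \<in> M"
  shows "iso C e"
proof -
  have idX: "Id C X \<in> hom C X X" and idY: "Id C Y \<in> hom C Y Y"
    using category_id(1,2)[OF cat e] .
  have ve: "Comp C v e \<in> hom C X Z" using comp_in_hom[OF cat e v] .
  have "Comp C v e = Comp C (Comp C v e) (Id C X)" using category_id(3)[OF cat ve] by simp
  then obtain d where d: "d \<in> hom C Y X" and de: "Comp C d e = Id C X"
      and ved: "Comp C (Comp C v e) d = v"
    using fs_lift[OF fs eE veM e ve idX v] by blast
  have "Comp C v (Comp C e d) = Comp C v (Id C Y)"
    using ved comp_assoc[OF cat d e v] category_id(3)[OF cat v] by simp
  then have ed: "Comp C e d = Id C Y"
    using mono_cancel[OF mono v comp_in_hom[OF cat d e] idY] by simp
  show ?thesis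
    unfolding iso_def using hom_arr[OF e] d de ed by (auto intro!: bexI[of _ d])
qed

lemma M_left_cancel:
  assumes cat: "category C" and fs: "factorisation_system C E M" and M_mono: "\<forall>m \<in> M. mono C m"
    and x: "x \<in> hom C X Y" and m: "m \<in> hom C Y Z" and mM: "m \<in> M" and mxM: "Comp C m x \<in> M"
  shows "x \<in> M"
proof -
  obtain e' m' W where e'E: "e' \<in> E" and m'M: "m' \<in> M" and e': "e' \<in> hom C X W"
      and m': "m' \<in> hom C W Y" and x_eq: "Comp C m' e' = x"
    using fs_factor[OF cat fs x] .
  have mm': "Comp C m m' \<in> hom C W Z" using comp_in_hom[OF cat m' m] .
  have "Comp C (Comp C m m') e' \<in> M" using mxM x_eq comp_assoc[OF cat e' m' m] by simp
  moreover have "Comp C m m' \<in> M"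
    using fs_comp_in_M[OF fs m'M mM] hom_arr[OF m'] hom_arr[OF m] by simp
  ultimately have "iso C e'"
    using E_iso_if_mono_comp_in_M[OF cat fs e'E e' mm'] M_mono by blast
  then have "e' \<in> M" using fs_iso_in_M[OF fs] by blast
  with fs_comp_in_M[OF fs _ m'M] show ?thesis
    using hom_arr[OF e'] hom_arr[OF m'] x_eq by force
qed

lemma multipushout_instance_in_hom:
  assumes "multipushout C f g S" "(h, k) \<in> S" "f \<in> hom C C0 A" "g \<in> hom C C0 B"
  shows "h \<in> hom C A (Cod C h)" "k \<in> hom C B (Cod C h)" "Comp C h f = Comp C k g"
proof -
  have "cocone C f g h k" using assms(1,2) unfolding multipushout_def by auto
  then show "h \<in> hom C A (Cod C h)" "k \<in> hom C B (Cod C h)" "Comp C h f = Comp C k g"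
    using hom_arr[OF assms(3)] hom_arr[OF assms(4)] unfolding cocone_def hom_def by auto
qed

lemma cocone_homI:
  "f \<in> hom C C0 A \<Longrightarrow> g \<in> hom C C0 B \<Longrightarrow> x \<in> hom C A D \<Longrightarrow> y \<in> hom C B D \<Longrightarrow>
     Comp C x f = Comp C y g \<Longrightarrow> cocone C f g x y"
  unfolding cocone_def hom_def by auto

lemma multipushout_factor:
  assumes "multipushout C f g S" "cocone C f g x y" "Cod C x = D"
  obtains h k w where "(h, k) \<in> S" "w \<in> hom C (Cod C h) D" "Comp C w h = x" "Comp C w k = y"
proof -
  have "\<forall>x y. cocone C f g x y \<longrightarrow>
          (\<exists>!(p, w). p \<in> S \<and> w \<in> hom C (Cod C (fst p)) (Cod C x) \<and>
                     Comp C w (fst p) = x \<and> Comp C w (snd p) = y)"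
    using assms(1) unfolding multipushout_def by (elim conjE)
  from ex1_implies_ex[OF this[rule_format, OF assms(2)]] obtain p w
    where "p \<in> S" "w \<in> hom C (Cod C (fst p)) (Cod C x)" "Comp C w (fst p) = x"
      "Comp C w (snd p) = y"
    by auto
  then show ?thesis using that[of "fst p" "snd p" w] assms(3) by simp
qed

lemma multipushout_factor_unique:
  assumes "multipushout C f g S" "cocone C f g x y" "Cod C x = D"
    and "(h, k) \<in> S" "w \<in> hom C (Cod C h) D" "Comp C w h = x" "Comp C w k = y"
    and "(h', k') \<in> S" "w' \<in> hom C (Cod C h') D" "Comp C w' h' = x" "Comp C w' k' = y"
  shows "h' = h \<and> k' = k \<and> w' = w"
proof -
  define factors where "factors = (\<lambda>(p, w). p \<in> S \<and> w \<in> hom C (Cod C (fst p)) (Cod C x) \<and>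
          Comp C w (fst p) = x \<and> Comp C w (snd p) = y)"
  have "\<forall>x y. cocone C f g x y \<longrightarrow>
          (\<exists>!(p, w). p \<in> S \<and> w \<in> hom C (Cod C (fst p)) (Cod C x) \<and>
                     Comp C w (fst p) = x \<and> Comp C w (snd p) = y)"
    using assms(1) unfolding multipushout_def by (elim conjE)
  then have "\<exists>!z. factors z" using assms(2) unfolding factors_def by blast
  moreover have "factors ((h, k), w)" "factors ((h', k'), w')"
    using assms(3-) unfolding factors_def by simp_all
  ultimately have "((h', k'), w') = ((h, k), w)" by blast
  then show ?thesis by simp
qed

lemma multipushout_comparison_through_upper_bound:
  assumes cat: "category C" and mp: "multipushout C f g S"
    and f: "f \<in> hom C C0 A" and g: "g \<in> hom C C0 B"
    and inst: "(h, k) \<in> S" and u: "u \<in> hom C (Cod C h) D"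
    and uh: "Comp C u h = a" and uk: "Comp C u k = b"
    and n: "n \<in> hom C N D" and mono: "mono C n"
    and s: "s \<in> hom C A N" and t: "t \<in> hom C B N"
    and ns: "Comp C n s = a" and nt: "Comp C n t = b"
  obtains w where "w \<in> hom C (Cod C h) N" "Comp C n w = u"
proof -
  note h = multipushout_instance_in_hom(1)[OF mp inst f g]
    and k = multipushout_instance_in_hom(2)[OF mp inst f g]
    and hk = multipushout_instance_in_hom(3)[OF mp inst f g]
  have a: "a \<in> hom C A D" and b: "b \<in> hom C B D"
    using comp_in_hom[OF cat h u] comp_in_hom[OF cat k u] uh uk by simp_all
  have ab: "Comp C a f = Comp C b g"
    using comp_assoc[OF cat f h u] comp_assoc[OF cat g k u] hk uh uk by simp
  then have "Comp C n (Comp C s f) = Comp C n (Comp C t g)"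
    using comp_assoc[OF cat f s n] comp_assoc[OF cat g t n] ns nt by simp
  then have "Comp C s f = Comp C t g"
    using mono_cancel[OF mono n comp_in_hom[OF cat f s] comp_in_hom[OF cat g t]] by simp
  then have "cocone C f g s t" using cocone_homI[OF f g s t] by simp
  then obtain h' k' w where inst': "(h', k') \<in> S" and w: "w \<in> hom C (Cod C h') N"
      and wh': "Comp C w h' = s" and wk': "Comp C w k' = t"
    using multipushout_factor[OF mp] hom_arr[OF s] by blast
  note h' = multipushout_instance_in_hom(1)[OF mp inst' f g]
    and k' = multipushout_instance_in_hom(2)[OF mp inst' f g]
  have "Comp C (Comp C n w) h' = a" "Comp C (Comp C n w) k' = b"
    using comp_assoc[OF cat h' w n] comp_assoc[OF cat k' w n] wh' wk' ns nt by simp_all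
  then have "h' = h \<and> Comp C n w = u"
    using multipushout_factor_unique[OF mp cocone_homI[OF f g a b ab] _ inst u uh uk inst'
        comp_in_hom[OF cat w n]] hom_arr[OF a] by blast
  then show ?thesis using that w by blast
qed

lemma sub_le_by_lifting:
  assumes cat: "category C" and fs: "factorisation_system C E M" and M_mono: "\<forall>m \<in> M. mono C m"
    and eE: "e \<in> E" and qM: "q \<in> M" and nM: "n \<in> M"
    and e: "e \<in> hom C P Q" and q: "q \<in> hom C Q D" and n: "n \<in> hom C N D"
    and w: "w \<in> hom C P N" and sq: "Comp C q e = Comp C n w"
  shows "sub_le C M q n"
proof -
  obtain d where d: "d \<in> hom C Q N" and nd: "Comp C n d = q"
    using fs_lift[OF fs eE nM e n w q sq] by blast
  have "d \<in> M" using M_left_cancel[OF cat fs M_mono d n nM] nd qM by simp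
  then show ?thesis
    unfolding sub_le_def using hom_arr[OF d] hom_arr[OF n] hom_arr[OF q] nd
    by (auto intro!: bexI[of _ d])
qed

lemma factorised_comparison_below_upper_bound:
  assumes cat: "category C" and fs: "factorisation_system C E M" and M_mono: "\<forall>m \<in> M. mono C m"
    and f: "f \<in> hom C C0 A" and g: "g \<in> hom C C0 B"
    and mp: "multipushout C f g S" and inst: "(h, k) \<in> S"
    and u: "u \<in> hom C (Cod C h) D" and uh: "Comp C u h = a" and uk: "Comp C u k = b"
    and eE: "e \<in> E" and qM: "q \<in> M" and e: "e \<in> hom C (Cod C h) Q" and q: "q \<in> hom C Q D"
    and qe: "Comp C q e = u"
    and n: "is_subobject C M D n" and an: "sub_le C M a n" and bn: "sub_le C M b n"
  shows "sub_le C M q n"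
proof -
  from n an bn obtain s t where nM: "n \<in> M" and nD: "Cod C n = D"
      and sM: "s \<in> M" "Cod C s = Dom C n" "Dom C s = Dom C a" and ns: "Comp C n s = a"
      and tM: "t \<in> M" "Cod C t = Dom C n" "Dom C t = Dom C b" and nt: "Comp C n t = b"
    unfolding is_subobject_def sub_le_def by auto
  have "a \<in> hom C A D" "b \<in> hom C B D"
    using comp_in_hom[OF cat multipushout_instance_in_hom(1)[OF mp inst f g] u]
      comp_in_hom[OF cat multipushout_instance_in_hom(2)[OF mp inst f g] u] uh uk
    by simp_all
  then have n: "n \<in> hom C (Dom C n) D" and s: "s \<in> hom C A (Dom C n)"
      and t: "t \<in> hom C B (Dom C n)"
    using fs_arr[OF fs] nM nD sM tM unfolding hom_def by auto
  obtain w where "w \<in> hom C (Cod C h) (Dom C n)" "Comp C n w = u"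
    using multipushout_comparison_through_upper_bound[OF cat mp f g inst u uh uk n _ s t ns nt]
      M_mono nM by blast
  then show ?thesis
    using sub_le_by_lifting[OF cat fs M_mono eE qM nM e q n] qe by simp
qed

theorem lemma8p4:
  fixes \<C> :: "('o, 'a) cat" and E M :: "'a set" and S :: "('a \<times> 'a) set"
    and f g a b h k u e q :: 'a and A B C0 D :: 'o
  assumes cat: "category \<C>"
    and fs: "factorisation_system \<C> E M"
    and M_mono: "\<forall>m \<in> M. mono \<C> m"
    and f: "f \<in> hom \<C> C0 A" and g: "g \<in> hom \<C> C0 B"
    and a: "a \<in> hom \<C> A D" and b: "b \<in> hom \<C> B D"
    and aM: "a \<in> M" and bM: "b \<in> M"
    and comm: "Comp \<C> a f = Comp \<C> b g"
    and mp: "multipushout \<C> f g S"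
    and inst: "(h, k) \<in> S"
    and u: "u \<in> hom \<C> (Cod \<C> h) D" and uh: "Comp \<C> u h = a" and uk: "Comp \<C> u k = b"
    and eE: "e \<in> E" and qM: "q \<in> M"
    and eq: "Cod \<C> e = Dom \<C> q" and fact: "Comp \<C> q e = u"
  shows "Comp \<C> e h \<in> M \<and> Comp \<C> e k \<in> M \<and>
         Comp \<C> q (Comp \<C> e h) = a \<and> Comp \<C> q (Comp \<C> e k) = b \<and>
         is_join \<C> M D a b q"
proof -
  have "e \<in> Arr \<C>" "q \<in> Arr \<C>" using fs_arr[OF fs] eE qM by auto
  note e = comp_in_homD(1)[OF cat this eq, unfolded fact, OF u]
    and q = comp_in_homD(2)[OF cat this eq, unfolded fact, OF u]
  note h = multipushout_instance_in_hom(1)[OF mp inst f g]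
    and k = multipushout_instance_in_hom(2)[OF mp inst f g]
  have qeh: "Comp \<C> q (Comp \<C> e h) = a" and qek: "Comp \<C> q (Comp \<C> e k) = b"
    using comp_assoc[OF cat h e q] comp_assoc[OF cat k e q] fact uh uk by simp_all
  have eh: "Comp \<C> e h \<in> hom \<C> A (Dom \<C> q)" and ek: "Comp \<C> e k \<in> hom \<C> B (Dom \<C> q)"
    using comp_in_hom[OF cat h e] comp_in_hom[OF cat k e] .
  have ehM: "Comp \<C> e h \<in> M" and ekM: "Comp \<C> e k \<in> M"
    using M_left_cancel[OF cat fs M_mono eh q qM] M_left_cancel[OF cat fs M_mono ek q qM]
      qeh qek aM bM by simp_all
  have "is_join \<C> M D a b q"
    unfolding is_join_def
    using factorised_comparison_below_upper_bound[OF cat fs M_mono f g mp inst u uh uk eE qM e q fact]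
      qM hom_arr[OF q] hom_arr[OF eh] hom_arr[OF ek] ehM ekM qeh qek hom_arr[OF a] hom_arr[OF b]
    unfolding is_subobject_def sub_le_def by blast
  with ehM ekM qeh qek show ?thesis by blast
qed

end
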